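(* Let $p$ be a prime and let $n=p^{\beta}(pq+r)$ with $\beta,q,r\in\mathbb{N}$ and $\{-q\}_{p-1}<r<p$. Then $$\operatorname{ord}_p(n!)=\Big\lfloor\frac{n-1}{p-1}\Big\rfloor\iff q=0.$$
   Context: $\{a\}_{m}$ denotes the least nonnegative residue of the integer $a$ modulo the positive integer $m$. $\operatorname{ord}_p$ is the $p$-adic order. *)

theory Defs
  imports "HOL-Computational_Algebra.Computational_Algebra"
begin

end

theory Submission
  imports Defs
begin

text \<open>By Legendre's formula \<open>(p - 1) \<cdot> ord\<^sub>p(n!) = n - s\<^sub>p(n)\<close>, where \<open>s\<^sub>p\<close> is the base-\<open>p\<close>
  digit sum, so \<open>ord\<^sub>p(n!) = \<lfloor>(n - 1)/(p - 1)\<rfloor>\<close> holds exactly when \<open>s\<^sub>p(n) < p\<close>. For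
  \<open>n = p\<^sup>\<beta>(pq + r)\<close> we have \<open>s\<^sub>p(n) = r + s\<^sub>p(q)\<close>. If \<open>q = 0\<close> this is \<open>r < p\<close>. If \<open>q > 0\<close>
  then \<open>1 \<le> s\<^sub>p(q) \<equiv> q (mod p - 1)\<close>, and \<open>r > {-q}\<^bsub>p-1\<^esub>\<close> forces \<open>r + s\<^sub>p(q) \<ge> p\<close>.\<close>

function digit_sum :: "nat \<Rightarrow> nat \<Rightarrow> nat" where
  "digit_sum b n = (if b \<le> 1 \<or> n = 0 then 0 else n mod b + digit_sum b (n div b))"
  by auto
termination by (relation "measure snd") auto

declare digit_sum.simps [simp del]

lemma digit_sum_0 [simp]: "digit_sum b 0 = 0"
  by (simp add: digit_sum.simps)

lemma digit_sum_rec: "1 < b \<Longrightarrow> digit_sum b n = n mod b + digit_sum b (n div b)"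
  by (cases "n = 0") (simp_all add: digit_sum.simps [of b n])

lemma digit_sum_mult_add:
  "1 < b \<Longrightarrow> r < b \<Longrightarrow> digit_sum b (b * q + r) = r + digit_sum b q"
  by (simp add: digit_sum_rec [of b "b * q + r"])

lemma digit_sum_power_mult: "1 < b \<Longrightarrow> digit_sum b (b ^ k * m) = digit_sum b m"
  by (induction k) (simp_all add: mult.assoc digit_sum_mult_add [where r = 0, simplified])

lemma digit_sum_pos:
  assumes "1 < b" "0 < n"
  shows "0 < digit_sum b n"
  using assms(2)
proof (induction n rule: less_induct)
  case (less n)
  show ?case
  proof (cases "n mod b = 0")
    case True
    with less.prems assms(1) have "0 < n div b" "n div b < n"
      by (auto simp: div_greater_zero_iff dest: mod_less)
    with less.IH show ?thesis by (simp add: digit_sum_rec [OF assms(1), of n])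
  next
    case False
    then show ?thesis by (simp add: digit_sum_rec [OF assms(1), of n])
  qed
qed

lemma digit_sum_mod_pred:
  assumes b: "1 < b"
  shows "digit_sum b n mod (b - 1) = n mod (b - 1)"
proof (induction n rule: less_induct)
  case (less n)
  show ?case
  proof (cases "n = 0")
    case True
    then show ?thesis by simp
  next
    case False
    with b less.IH have IH: "digit_sum b (n div b) mod (b - 1) = n div b mod (b - 1)"
      by simp
    have "b * (n div b) mod (b - 1) = n div b mod (b - 1)"
      using b mod_mult_self2 [of "n div b" "b - 1" "n div b"]
      by (simp add: algebra_simps)
    then have "n mod (b - 1) = (n mod b + n div b) mod (b - 1)"
      by (metis div_mult_mod_eq mod_add_right_eq mult.commute add.commute)
    also have "\<dots> = (n mod b + digit_sum b (n div b)) mod (b - 1)"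
      using IH by (metis mod_add_right_eq)
    finally show ?thesis by (simp add: digit_sum_rec [OF b, of n])
  qed
qed

lemma multiplicity_fact_Suc:
  fixes p :: nat
  assumes "prime p"
  shows "multiplicity p (fact (Suc n)) = multiplicity p (Suc n) + multiplicity p (fact n)"
proof -
  have "multiplicity p (fact (Suc n)) = multiplicity p (Suc n * fact n)"
    by (simp only: fact_Suc of_nat_id)
  also have "\<dots> = multiplicity p (Suc n) + multiplicity p (fact n)"
    using assms by (intro prime_elem_multiplicity_mult_distrib) auto
  finally show ?thesis .
qed

lemma multiplicity_fact_rec:
  fixes p :: nat
  assumes p: "prime p"
  shows "multiplicity p (fact n) = n div p + multiplicity p (fact (n div p))"
proof (induction n)
  case 0
  then show ?case by simp
next
  case (Suc n)
  have p1: "1 < p" using p prime_gt_1_nat by blast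
  note fact_Suc_mult = multiplicity_fact_Suc [OF p, of n]
  show ?case
  proof (cases "p dvd Suc n")
    case False
    then have "Suc n div p = n div p"
      by (simp add: div_Suc dvd_eq_mod_eq_0)
    with False show ?thesis
      using Suc.IH fact_Suc_mult by (simp add: not_dvd_imp_multiplicity_0)
  next
    case True
    then obtain m where m: "Suc n = p * Suc m"
      by (metis dvd_def mult_0_right nat.distinct(1) not0_implies_Suc)
    with p1 have "n div p = m" by (intro div_nat_eqI) auto
    moreover have "Suc n div p = Suc m" using m p1 by simp
    moreover have "multiplicity p (Suc n) = Suc (multiplicity p (Suc m))"
      unfolding m using p1 by (intro multiplicity_times_same) auto
    ultimately show ?thesis
      using Suc.IH fact_Suc_mult multiplicity_fact_Suc [OF p, of m] by simp
  qed
qed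

theorem legendre_digit_sum:
  fixes p :: nat
  assumes p: "prime p"
  shows "(p - 1) * multiplicity p (fact n) + digit_sum p n = n"
proof (induction n rule: less_induct)
  case (less n)
  have p1: "1 < p" using p prime_gt_1_nat by blast
  show ?case
  proof (cases "n = 0")
    case True
    then show ?thesis by simp
  next
    case False
    with p1 have IH: "(p - 1) * multiplicity p (fact (n div p)) + digit_sum p (n div p) = n div p"
      using less.IH by simp
    have "(p - 1) * multiplicity p (fact n) + digit_sum p n
        = (p - 1) * (n div p) + n mod p
          + ((p - 1) * multiplicity p (fact (n div p)) + digit_sum p (n div p))"
      by (simp add: multiplicity_fact_rec [OF p, of n] digit_sum_rec [OF p1, of n] algebra_simps)
    also have "\<dots> = p * (n div p) + n mod p"
      using IH p1 by (simp add: algebra_simps)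
    finally show ?thesis by simp
  qed
qed

lemma multiplicity_fact_eq_div_iff:
  fixes p :: nat
  assumes p: "prime p" and "0 < n"
  shows "multiplicity p (fact n) = (n - 1) div (p - 1) \<longleftrightarrow> digit_sum p n < p"
proof -
  have p1: "1 < p" using p prime_gt_1_nat by blast
  define v where "v = multiplicity p (fact n :: nat)"
  define s where "s = digit_sum p n"
  have "0 < s" using digit_sum_pos [OF p1 \<open>0 < n\<close>] by (simp add: s_def)
  then have "n - 1 = (p - 1) * v + (s - 1)"
    using legendre_digit_sum [OF p, of n] by (simp add: v_def s_def)
  then have "(n - 1) div (p - 1) = v + (s - 1) div (p - 1)"
    using p1 by simp
  then show ?thesis
    using p1 \<open>0 < s\<close> by (auto simp: v_def s_def [symmetric] div_eq_0_iff)
qed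

lemma le_neg_mod_of_add_le:
  fixes d r m :: int
  assumes "0 < d" "0 < r" "d + r \<le> m"
  shows "r \<le> (- d) mod m"
proof -
  have "(- d) mod m = (m - d) mod m"
    by (metis add.commute diff_conv_add_uminus mod_add_self2)
  also have "\<dots> = m - d" using assms by (intro mod_pos_pos_trivial) auto
  finally show ?thesis using assms by simp
qed

lemma le_add_digit_sum_of_neg_mod_lt:
  assumes b: "1 < b" and "0 < q" and r: "(- int q) mod (int b - 1) < int r"
  shows "b \<le> r + digit_sum b q"
proof (rule ccontr)
  define d where "d = digit_sum b q"
  assume "\<not> ?thesis"
  then have "int d + int r \<le> int b - 1" by (simp add: d_def)
  moreover have "0 < d" using digit_sum_pos [OF b \<open>0 < q\<close>] by (simp add: d_def)
  moreover have "0 < r" using b r pos_mod_sign [of "int b - 1" "- int q"] by linarith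
  ultimately have "int r \<le> (- int d) mod (int b - 1)"
    by (intro le_neg_mod_of_add_le) auto
  moreover have "(- int d) mod (int b - 1) = (- int q) mod (int b - 1)"
    using digit_sum_mod_pred [OF b, of q] b
    by (metis d_def mod_minus_cong of_nat_1 of_nat_diff less_imp_le zmod_int)
  ultimately show False using r by simp
qed

theorem lemma4p1:
  fixes p \<beta> q r n :: nat
  assumes "prime p"
    and "n = p ^ \<beta> * (p * q + r)"
    and "(- int q) mod (int p - 1) < int r"
    and "r < p"
  shows "multiplicity p (fact n) = (n - 1) div (p - 1) \<longleftrightarrow> q = 0"
proof -
  have p1: "1 < p" using assms(1) prime_gt_1_nat by blast
  have "0 \<le> (- int q) mod (int p - 1)" using p1 by simp
  then have "0 < r" using assms(3) by linarith
  have digits: "digit_sum p n = r + digit_sum p q"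
    using assms(2,4) p1 by (simp add: digit_sum_power_mult digit_sum_mult_add)
  have "0 < n" using \<open>0 < r\<close> p1 by (simp add: assms(2))
  show ?thesis
    using multiplicity_fact_eq_div_iff [OF assms(1) \<open>0 < n\<close>] digits assms(4)
      le_add_digit_sum_of_neg_mod_lt [OF p1 _ assms(3)]
    by (cases "q = 0") auto
qed

end
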